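(* The set of infinite words accepted by $\widehat{\mathcal{T}_{p/q}}$ is the topological closure (in $B^{\omega}$ with the product topology) of the set of span-words $\{M_n\ominus\mu_n : n\in\mathbb{N}\}$.
   Context: Let $p>q>1$ be coprime integers, $A_p=\{0,\dots,p-1\}$, $A_q=\{0,\dots,q-1\}$ and $B=\{p-(2q-1),\dots,p-1\}$. For $n\in\mathbb{N}$ and $a\in\mathbb{Z}$, let $\tau(n,a)=\frac{np+a}{q}$, defined only when $q$ divides $np+a$. Let $\mathcal{T}_{p/q}$ be the deterministic automaton with state set $\mathbb{N}$, alphabet $A_p$, initial state $0$, and transitions $n\xrightarrow{a}\tau(n,a)$ for $a\in A_p$ with $\tau(n,a)$ defined. The minimal word $\mu_n\in A_q^{\omega}$ (resp. maximal word $M_n\in\{p-q,\dots,p-1\}^{\omega}$) is the unique infinite word over $A_q$ (resp. over $\{p-q,\dots,p-1\}$) labelling a path of $\mathcal{T}_{p/q}$ starting at $n$. The span-word of $n$ is $M_n\ominus\mu_n$, with $\ominus$ letter-wise subtraction. Let $\widehat{\mathcal{T}_{p/q}}$ be the deterministic automaton with state set $\mathbb{N}$, alphabet $B$, initial state $0$, and transitions $n\xrightarrow{a}\tau(n,a)$ for $a\in B$ with $\tau(n,a)$ defined; an infinite word is accepted if each of its finite prefixes labels a path from $0$. *)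

theory Defs
  imports "HOL-Analysis.Analysis"
begin

text \<open>Letters and states are integers; the state set of the automata is \<open>\<nat>\<close>,
  i.e. the nonnegative integers. Infinite words are functions \<open>nat \<Rightarrow> int\<close>.\<close>

definition Aq :: "int \<Rightarrow> int set" where
  "Aq q = {0..q-1}"

definition Amax :: "int \<Rightarrow> int \<Rightarrow> int set" where
  "Amax p q = {p-q..p-1}"

definition Bset :: "int \<Rightarrow> int \<Rightarrow> int set" where
  "Bset p q = {p-(2*q-1)..p-1}"

text \<open>A run (state sequence) of \<open>T_{p/q}\<close> starting at \<open>n\<close> labelled by the first \<open>k\<close>
  letters of \<open>w\<close>: all states lie in \<open>\<nat>\<close> and each step is the transition
  \<open>s i --(w i)--> (p * s i + w i) / q\<close>, which is defined only when \<open>q\<close> divides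
  \<open>p * s i + w i\<close>.\<close>
definition finite_path :: "int \<Rightarrow> int \<Rightarrow> int \<Rightarrow> (nat \<Rightarrow> int) \<Rightarrow> nat \<Rightarrow> bool" where
  "finite_path p q n w k \<longleftrightarrow>
     (\<exists>s::nat \<Rightarrow> int. s 0 = n \<and> (\<forall>i\<le>k. s i \<ge> 0) \<and>
        (\<forall>i<k. q * s (Suc i) = p * s i + w i))"

definition infinite_path :: "int \<Rightarrow> int \<Rightarrow> int \<Rightarrow> (nat \<Rightarrow> int) \<Rightarrow> bool" where
  "infinite_path p q n w \<longleftrightarrow>
     (\<exists>s::nat \<Rightarrow> int. s 0 = n \<and> (\<forall>i. s i \<ge> 0) \<and>
        (\<forall>i. q * s (Suc i) = p * s i + w i))"

definition min_word :: "int \<Rightarrow> int \<Rightarrow> int \<Rightarrow> (nat \<Rightarrow> int)" where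
  "min_word p q n = (THE w. (\<forall>i. w i \<in> Aq q) \<and> infinite_path p q n w)"

definition max_word :: "int \<Rightarrow> int \<Rightarrow> int \<Rightarrow> (nat \<Rightarrow> int)" where
  "max_word p q n = (THE w. (\<forall>i. w i \<in> Amax p q) \<and> infinite_path p q n w)"

definition span_word :: "int \<Rightarrow> int \<Rightarrow> int \<Rightarrow> (nat \<Rightarrow> int)" where
  "span_word p q n = (\<lambda>i. max_word p q n i - min_word p q n i)"

definition accepted_hat :: "int \<Rightarrow> int \<Rightarrow> (nat \<Rightarrow> int) set" where
  "accepted_hat p q = {w. (\<forall>i. w i \<in> Bset p q) \<and> (\<forall>k. finite_path p q 0 w k)}"

definition Bomega_top :: "int \<Rightarrow> int \<Rightarrow> (nat \<Rightarrow> int) topology" where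
  "Bomega_top p q = product_topology (\<lambda>_. discrete_topology (Bset p q)) UNIV"

end

theory Submission
  imports Defs
begin

text \<open>A word over a window \<open>{c-q+1..c}\<close> of \<open>q\<close> consecutive letters labels at most one path
  from a state \<open>n\<close>, namely the greedy one \<open>x \<mapsto> (p x + c) div q\<close>; so \<open>\<mu>_n\<close> and \<open>M_n\<close> are the
  greedy words for \<open>c = q-1\<close> and \<open>c = p-1\<close>, and the difference of their state sequences
  is a path from 0 labelled by the span-word, whose letters lie in \<open>B\<close>. Conversely, let \<open>w\<close>
  be accepted, labelling a path \<open>d\<close> from 0 on its first \<open>k\<close> letters. Choose letters
  \<open>a_i \<in> A_q\<close> with \<open>a_i + w_i \<in> {p-q..p-1}\<close>. As \<open>p\<close> is invertible modulo \<open>q^k\<close>, some \<open>n\<close> has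
  \<open>a_0 \<dots> a_{k-1}\<close> as prefix of \<open>\<mu>_n\<close>; then the states of \<open>M_n\<close> are those of \<open>\<mu>_n\<close> plus \<open>d\<close>,
  so \<open>M_n \<ominus> \<mu>_n\<close> begins with \<open>w_0 \<dots> w_{k-1}\<close>. In the product of discrete topologies this
  prefix approximation is exactly membership in the closure.\<close>

lemma closure_of_discrete_product_nat:
  assumes "S \<subseteq> {w. \<forall>i. w i \<in> A}"
  shows "product_topology (\<lambda>_. discrete_topology A) (UNIV :: nat set) closure_of S =
         {w. (\<forall>i. w i \<in> A) \<and> (\<forall>k. \<exists>s\<in>S. \<forall>i<k. s i = w i)}"
    (is "?X closure_of S = ?R")
proof
  show "?X closure_of S \<subseteq> ?R"
  proof
    fix w assume w: "w \<in> ?X closure_of S"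
    then have wA: "\<forall>i. w i \<in> A"
      using closure_of_subset_topspace by (fastforce simp: PiE_UNIV_domain)
    have "\<exists>s\<in>S. \<forall>i<k. s i = w i" for k
    proof -
      define C where "C = PiE UNIV (\<lambda>i. if i < k then {w i} else A)"
      have "openin ?X C"
        unfolding C_def openin_PiE_gen
        by (rule disjI2, intro conjI ballI, rule finite_subset[of _ "{..<k}"]) (use wA in auto)
      moreover have "w \<in> C"
        unfolding C_def using wA by (auto simp: PiE_UNIV_domain)
      ultimately obtain s where s: "s \<in> S" "s \<in> C"
        using w unfolding in_closure_of by blast
      have "s i = w i" if "i < k" for i
        using s(2) that unfolding C_def PiE_UNIV_domain by (auto simp: Pi_iff dest: spec[of _ i])
      then show ?thesis using s(1) by blast
    qed
    then show "w \<in> ?R" using wA by blast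
  qed
next
  show "?R \<subseteq> ?X closure_of S"
  proof
    fix w assume w: "w \<in> ?R"
    show "w \<in> ?X closure_of S"
      unfolding in_closure_of
    proof (intro conjI allI impI)
      show "w \<in> topspace ?X" using w by (simp add: PiE_UNIV_domain)
      fix T assume T: "w \<in> T \<and> openin ?X T"
      then obtain U where fin: "finite {i. U i \<noteq> A}"
        and wU: "w \<in> PiE UNIV U" and UT: "PiE UNIV U \<subseteq> T"
        unfolding openin_product_topology_alt by auto
      obtain k where k: "{i. U i \<noteq> A} \<subseteq> {..<k}"
        using finite_nat_bounded[OF fin] by blast
      obtain s where s: "s \<in> S" "\<forall>i<k. s i = w i" using w by blast
      have "s i \<in> U i" for i
      proof (cases "i < k")
        case True then show ?thesis using s wU by (auto simp: PiE_UNIV_domain)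
      next
        case False
        then have "U i = A" using k by auto
        then show ?thesis using s(1) assms by auto
      qed
      then have "s \<in> T" using UT by (auto simp: PiE_UNIV_domain)
      then show "\<exists>y. y \<in> S \<and> y \<in> T" using s by blast
    qed
  qed
qed

lemma finite_path_cong:
  assumes "\<forall>i<k. w i = w' i"
  shows "finite_path p q n w k = finite_path p q n w' k"
  using assms unfolding finite_path_def by auto

definition greedy_step :: "int \<Rightarrow> int \<Rightarrow> int \<Rightarrow> int \<Rightarrow> int" where
  "greedy_step p q c x = (p * x + c) div q"

definition greedy_state :: "int \<Rightarrow> int \<Rightarrow> int \<Rightarrow> int \<Rightarrow> nat \<Rightarrow> int" where
  "greedy_state p q c n i = (greedy_step p q c ^^ i) n"

definition greedy_word :: "int \<Rightarrow> int \<Rightarrow> int \<Rightarrow> int \<Rightarrow> nat \<Rightarrow> int" where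
  "greedy_word p q c n i = q * greedy_state p q c n (Suc i) - p * greedy_state p q c n i"

lemma greedy_state_0 [simp]: "greedy_state p q c n 0 = n"
  by (simp add: greedy_state_def)

lemma greedy_state_Suc [simp]:
  "greedy_state p q c n (Suc i) = greedy_step p q c (greedy_state p q c n i)"
  by (simp add: greedy_state_def)

lemma greedy_state_Suc_shift:
  "greedy_state p q c n (Suc i) = greedy_state p q c (greedy_step p q c n) i"
  by (simp add: greedy_state_def funpow_Suc_right del: funpow.simps)

lemma greedy_word_Suc_shift:
  "greedy_word p q c n (Suc i) = greedy_word p q c (greedy_step p q c n) i"
  by (simp add: greedy_word_def greedy_state_Suc_shift del: greedy_state_Suc)

lemma greedy_step_eqI:
  assumes "0 < q" "p * x + c = q * y + e" "0 \<le> e" "e < q"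
  shows "greedy_step p q c x = y"
  using assms unfolding greedy_step_def by simp

lemma greedy_letter_range:
  assumes "0 < q"
  shows "q * greedy_step p q c x - p * x \<in> {c-q+1..c}"
proof -
  let ?y = "p * x + c"
  have "q * greedy_step p q c x - p * x = c - ?y mod q"
    unfolding greedy_step_def by (simp add: minus_mod_eq_mult_div [symmetric])
  moreover have "0 \<le> ?y mod q" "?y mod q < q" using assms by auto
  ultimately show ?thesis by auto
qed

lemma greedy_word_range:
  assumes "0 < q"
  shows "greedy_word p q c n i \<in> {c-q+1..c}"
  unfolding greedy_word_def using greedy_letter_range[OF assms] by simp

lemma greedy_state_nonneg:
  assumes "0 < q" "0 < p" "0 \<le> c" "0 \<le> n"
  shows "0 \<le> greedy_state p q c n i"
proof (induction i)
  case 0 then show ?case using assms by simp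
next
  case (Suc i)
  then have "0 \<le> p * greedy_state p q c n i + c" using assms by simp
  then show ?case using assms by (simp add: greedy_step_def pos_imp_zdiv_nonneg_iff)
qed

lemma greedy_state_mono_offset:
  assumes "0 < q" "0 \<le> p" "c \<le> c'"
  shows "greedy_state p q c n i \<le> greedy_state p q c' n i"
proof (induction i)
  case 0 then show ?case by simp
next
  case (Suc i)
  then have "p * greedy_state p q c n i + c \<le> p * greedy_state p q c' n i + c'"
    using assms by (simp add: add_mono mult_left_mono)
  then show ?case using assms by (simp add: greedy_step_def zdiv_mono1)
qed

lemma infinite_path_window_imp_greedy:
  assumes "0 < q" "infinite_path p q n w" "\<forall>i. w i \<in> {c-q+1..c}"
  shows "w = greedy_word p q c n"
proof -
  obtain s where s0: "s 0 = n" and step: "\<forall>i. q * s (Suc i) = p * s i + w i"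
    using assms(2) unfolding infinite_path_def by blast
  have s_greedy: "s i = greedy_state p q c n i" for i
  proof (induction i)
    case 0 then show ?case using s0 by simp
  next
    case (Suc i)
    have "greedy_step p q c (s i) = s (Suc i)"
      by (rule greedy_step_eqI[where e = "c - w i"])
        (use assms(1) assms(3)[rule_format, of i] step in auto)
    then show ?case using Suc by simp
  qed
  show ?thesis
  proof
    fix i show "w i = greedy_word p q c n i"
      using step[rule_format, of i] s_greedy[of i] s_greedy[of "Suc i"]
      by (simp add: greedy_word_def)
  qed
qed

lemma the_window_word_eq_greedy_word:
  assumes "0 < q" "0 < p" "0 \<le> c" "0 \<le> n"
  shows "(THE w. (\<forall>i. w i \<in> {c-q+1..c}) \<and> infinite_path p q n w) = greedy_word p q c n"
proof (rule the_equality)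
  show "(\<forall>i. greedy_word p q c n i \<in> {c-q+1..c}) \<and> infinite_path p q n (greedy_word p q c n)"
    unfolding infinite_path_def greedy_word_def
    using greedy_letter_range[OF assms(1)] greedy_state_nonneg[OF assms]
    by (auto intro!: exI[of _ "greedy_state p q c n"])
qed (use infinite_path_window_imp_greedy[OF assms(1)] in blast)

lemma min_word_eq_greedy_word:
  assumes "0 < q" "0 < p" "0 \<le> n"
  shows "min_word p q n = greedy_word p q (q-1) n"
  using the_window_word_eq_greedy_word[of q p "q-1" n] assms
  by (simp add: min_word_def Aq_def)

lemma max_word_eq_greedy_word:
  assumes "0 < q" "q < p" "0 \<le> n"
  shows "max_word p q n = greedy_word p q (p-1) n"
  using the_window_word_eq_greedy_word[of q p "p-1" n] assms
  by (simp add: max_word_def Amax_def)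

lemma span_word_in_Bset:
  assumes "0 < q" "q < p" "0 \<le> n"
  shows "span_word p q n i \<in> Bset p q"
  using min_word_eq_greedy_word[of q p n] max_word_eq_greedy_word[OF assms] assms
     greedy_word_range[OF assms(1), of p "q-1" n i] greedy_word_range[OF assms(1), of p "p-1" n i]
  by (auto simp: span_word_def Bset_def assms)

lemma span_word_accepted:
  assumes "0 < q" "q < p" "0 \<le> n"
  shows "span_word p q n \<in> accepted_hat p q"
proof -
  define D where "D i = greedy_state p q (p-1) n i - greedy_state p q (q-1) n i" for i
  have "q * D (Suc i) = p * D i + span_word p q n i" for i
    using assms by (simp add: D_def span_word_def min_word_eq_greedy_word
        max_word_eq_greedy_word greedy_word_def algebra_simps)
  moreover have "0 \<le> D i" for i
    using greedy_state_mono_offset[of q p "q-1" "p-1" n i] assms by (simp add: D_def)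
  ultimately have "finite_path p q 0 (span_word p q n) k" for k
    unfolding finite_path_def by (auto simp: D_def intro!: exI[of _ D])
  then show ?thesis
    using span_word_in_Bset[OF assms] unfolding accepted_hat_def by blast
qed

lemma min_word_prefix_residue_class:
  assumes q: "1 < q" and cop: "coprime p q" and a: "\<forall>i<k. a i \<in> {0..q-1}"
  shows "\<exists>r. \<forall>t. \<forall>i<k. greedy_word p q (q-1) (r + q^k * t) i = a i"
  using a
proof (induction k arbitrary: a)
  case 0 then show ?case by simp
next
  case (Suc k)
  obtain r' where r': "\<And>t i. i < k \<Longrightarrow> greedy_word p q (q-1) (r' + q^k * t) i = a (Suc i)"
    using Suc.IH[of "\<lambda>i. a (Suc i)"] Suc.prems by auto
  have "gcd p (q ^ Suc k) = 1" using cop by simp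
  then obtain u v where uv: "u * p + v * q ^ Suc k = 1"
    using bezout_int[of p "q ^ Suc k"] by metis
  define X where "X = q * r' - a 0"
  define r where "r = u * X"
  show ?case
  proof (intro exI[of _ r] allI impI)
    fix t i assume i: "i < Suc k"
    define n where "n = r + q ^ Suc k * t"
    define m where "m = r' + q^k * (p * t - v * X)"
    \<comment> \<open>\<open>u\<close> inverts \<open>p\<close> modulo \<open>q^(k+1)\<close>, so \<open>p n + a_0\<close> is a multiple of \<open>q\<close> landing in the class of \<open>r'\<close>\<close>
    have "p * n + a 0 = (u * p) * X + a 0 + p * q ^ Suc k * t"
      unfolding n_def r_def by (simp add: algebra_simps)
    also have "\<dots> = (1 - v * q ^ Suc k) * X + a 0 + p * q ^ Suc k * t"
      using uv by (simp add: eq_diff_eq)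
    also have "\<dots> = q * m"
      unfolding m_def X_def by (simp add: algebra_simps)
    finally have pn: "p * n + a 0 = q * m" .
    have step: "greedy_step p q (q-1) n = m"
      by (rule greedy_step_eqI[where e = "q - 1 - a 0"]) (use pn q Suc.prems in auto)
    show "greedy_word p q (q-1) (r + q ^ Suc k * t) i = a i"
    proof (cases i)
      case 0
      then show ?thesis
        unfolding n_def [symmetric] using step pn by (simp add: greedy_word_def)
    next
      case (Suc j)
      have "greedy_word p q (q-1) n (Suc j) = a (Suc j)"
        unfolding greedy_word_Suc_shift step m_def using r' Suc i by simp
      then show ?thesis using Suc by (simp add: n_def)
    qed
  qed
qed

lemma min_word_prefix_realizable:
  assumes "1 < q" "coprime p q" "\<forall>i<k. a i \<in> {0..q-1}"
  obtains n where "0 \<le> n" "\<forall>i<k. greedy_word p q (q-1) n i = a i"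
proof -
  obtain r where r: "\<forall>t. \<forall>i<k. greedy_word p q (q-1) (r + q^k * t) i = a i"
    using min_word_prefix_residue_class[OF assms] by blast
  have "\<bar>r\<bar> \<le> q^k * \<bar>r\<bar>"
    using assms(1) mult_right_mono[of 1 "q^k" "\<bar>r\<bar>"] by simp
  then have "0 \<le> r + q^k * \<bar>r\<bar>" by linarith
  with r show thesis by (intro that) auto
qed

lemma greedy_state_shift_by_path:
  assumes q: "0 < q" and d0: "d 0 = 0" and d_step: "\<forall>i<k. q * d (Suc i) = p * d i + w i"
    and window: "\<forall>i<k. greedy_word p q c n i + w i \<in> {c'-q+1..c'}"
  shows "i \<le> k \<Longrightarrow> greedy_state p q c' n i = greedy_state p q c n i + d i"
proof (induction i)
  case 0 then show ?case using d0 by simp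
next
  case (Suc i)
  let ?S = "greedy_state p q c n" and ?T = "greedy_state p q c' n"
  from Suc have ik: "i < k" by simp
  let ?e = "c' - greedy_word p q c n i - w i"
  have "p * ?T i + c' = q * (?S (Suc i) + d (Suc i)) + ?e"
    using Suc ik d_step by (simp add: greedy_word_def algebra_simps)
  then have "greedy_step p q c' (?T i) = ?S (Suc i) + d (Suc i)"
    by (rule greedy_step_eqI[OF q]) (use window[rule_format, OF ik] in auto)
  then show ?case by simp
qed

lemma span_word_prefix_realizable:
  assumes q: "1 < q" and p: "q < p" and cop: "coprime p q" and w: "w \<in> accepted_hat p q"
  shows "\<exists>n::nat. \<forall>i<k. span_word p q (int n) i = w i"
proof -
  have wB: "w i \<in> {p-(2*q-1)..p-1}" for i
    using w unfolding accepted_hat_def Bset_def by auto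
  obtain d where d0: "d 0 = 0" and d_step: "\<forall>i<k. q * d (Suc i) = p * d i + w i"
    using w unfolding accepted_hat_def finite_path_def by blast
  define a where "a i = max 0 (p - q - w i)" for i
  have a_range: "a i \<in> {0..q-1}" and aw_range: "a i + w i \<in> {p-q..p-1}" for i
    using wB[of i] by (auto simp: a_def)
  obtain n where n0: "0 \<le> n" and n: "\<forall>i<k. greedy_word p q (q-1) n i = a i"
    using min_word_prefix_realizable[OF q cop] a_range by metis
  have TSd: "greedy_state p q (p-1) n i = greedy_state p q (q-1) n i + d i" if "i \<le> k" for i
    by (rule greedy_state_shift_by_path[OF _ d0 d_step _ that]) (use q n aw_range in auto)
  show ?thesis
  proof (intro exI[of _ "nat n"] allI impI)
    fix i assume i: "i < k"
    have "span_word p q (int (nat n)) i = q * d (Suc i) - p * d i"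
      using TSd[of i] TSd[of "Suc i"] i q p n0
      by (simp add: span_word_def min_word_eq_greedy_word max_word_eq_greedy_word
          greedy_word_def algebra_simps)
    then show "span_word p q (int (nat n)) i = w i" using d_step i by simp
  qed
qed

theorem mainTheorem9:
  fixes p q :: int
  assumes "p > q" and "q > 1" and "coprime p q"
  shows "accepted_hat p q =
         Bomega_top p q closure_of {span_word p q (int n) | n. True}"
proof -
  let ?Span = "{span_word p q (int n) | n. True}"
  have span_acc: "s \<in> accepted_hat p q" if "s \<in> ?Span" for s
    using that span_word_accepted assms by auto
  have closure_eq: "Bomega_top p q closure_of ?Span =
      {w. (\<forall>i. w i \<in> Bset p q) \<and> (\<forall>k. \<exists>s\<in>?Span. \<forall>i<k. s i = w i)}"
    unfolding Bomega_top_def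
    by (rule closure_of_discrete_product_nat) (use span_acc in \<open>auto simp: accepted_hat_def\<close>)
  show ?thesis
    unfolding closure_eq
  proof (intro set_eqI iffI)
    fix w assume w: "w \<in> accepted_hat p q"
    have "\<exists>s\<in>?Span. \<forall>i<k. s i = w i" for k
      using span_word_prefix_realizable[OF assms(2,1,3) w, of k] by blast
    then show "w \<in> {w. (\<forall>i. w i \<in> Bset p q) \<and> (\<forall>k. \<exists>s\<in>?Span. \<forall>i<k. s i = w i)}"
      using w by (simp add: accepted_hat_def)
  next
    fix w assume w: "w \<in> {w. (\<forall>i. w i \<in> Bset p q) \<and> (\<forall>k. \<exists>s\<in>?Span. \<forall>i<k. s i = w i)}"
    have "finite_path p q 0 w k" for k
    proof -
      obtain s where "s \<in> ?Span" "\<forall>i<k. s i = w i" using w by blast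
      then show ?thesis
        using span_acc finite_path_cong[of k s w p q 0] by (auto simp: accepted_hat_def)
    qed
    then show "w \<in> accepted_hat p q" using w unfolding accepted_hat_def by blast
  qed
qed

end
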